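(* Let $n\ge 3$. The resolving polynomial of the power graph $P(G(n))$ of the gyrogroup $G(n)$ (defined in the context) is $$\psi(P(G(n)),x)=x^{2^n}+2^n x^{2^n-1}+(2^{2n-2}+2^{n-1}-1)x^{2^n-2}+(2^{2n-2}-2^{n-1})x^{2^n-3}.$$
   Context: Let $n\ge 3$ be an integer and $m=2^{n-1}$. Let $P(n)=\{0,1,\dots,m-1\}$, $H(n)=\{m,m+1,\dots,2^n-1\}$ and $G(n)=P(n)\cup H(n)$. For $i,j\in G(n)$ let $t,s,k\in P(n)$ be the residues modulo $m$ (taken in $\{0,\dots,m-1\}$) of $i+j$, $i+(\frac m2-1)j$ and $(\frac m2+1)i+(\frac m2-1)j$, respectively, and define $i\oplus j=t$ if $i,j\in P(n)$; $i\oplus j=t+m$ if $i\in P(n),j\in H(n)$; $i\oplus j=s+m$ if $i\in H(n),j\in P(n)$; $i\oplus j=k$ if $i,j\in H(n)$. Then $(G(n),\oplus)$ is a gyrogroup with identity $e=0$. Powers are defined by $a^1=a$, $a^{k+1}=a^k\oplus a$. The power graph $P(G(n))$ is the simple undirected graph with vertex set $G(n)$ in which distinct vertices $u,v$ are adjacent if and only if $u^k=v$ or $v^k=u$ for some positive integer $k$. For a connected graph $G$ and an ordered set $U=\{u_1,\dots,u_s\}\subseteq V(G)$, the representation of $v$ is $r(v|U)=(d(v,u_1),\dots,d(v,u_s))$; $U$ is a resolving set if distinct vertices have distinct representations, and the metric dimension $\psi(G)$ is the minimum size of a resolving set. If $|V(G)|=N$ and $r_k$ denotes the number of resolving sets of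 $G$ of cardinality $k$, the resolving polynomial is $\psi(G,x)=\sum_{k=\psi(G)}^{N} r_k x^k$. *)

theory Defs
  imports "HOL-Computational_Algebra.Polynomial"
begin

definition gm :: "nat \<Rightarrow> nat" where
  "gm n = 2 ^ (n - 1)"

definition gcarrier :: "nat \<Rightarrow> nat set" where
  "gcarrier n = {0..<2 ^ n}"

text \<open>P(n) = {0..<m}, H(n) = {m..<2^n}. The operation follows the paper's case split.\<close>
definition gop :: "nat \<Rightarrow> nat \<Rightarrow> nat \<Rightarrow> nat" where
  "gop n i j =
     (let m = gm n;
          t = (i + j) mod m;
          s = (i + (m div 2 - 1) * j) mod m;
          k = ((m div 2 + 1) * i + (m div 2 - 1) * j) mod m
      in if i < m \<and> j < m then t
         else if i < m \<and> m \<le> j then t + m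
         else if m \<le> i \<and> j < m then s + m
         else k)"

text \<open>Powers: a^1 = a, a^(k+1) = a^k \<oplus> a (only positive exponents are used).\<close>
fun gpow :: "nat \<Rightarrow> nat \<Rightarrow> nat \<Rightarrow> nat" where
  "gpow n a 0 = 0"
| "gpow n a (Suc 0) = a"
| "gpow n a (Suc (Suc k)) = gop n (gpow n a (Suc k)) a"

definition power_adj :: "nat \<Rightarrow> nat \<Rightarrow> nat \<Rightarrow> bool" where
  "power_adj n u v \<longleftrightarrow> u \<in> gcarrier n \<and> v \<in> gcarrier n \<and> u \<noteq> v \<and>
     (\<exists>k::nat. k \<ge> 1 \<and> (gpow n u k = v \<or> gpow n v k = u))"

fun walk_le :: "'a set \<Rightarrow> ('a \<Rightarrow> 'a \<Rightarrow> bool) \<Rightarrow> nat \<Rightarrow> 'a \<Rightarrow> 'a \<Rightarrow> bool" where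
  "walk_le V E 0 u v \<longleftrightarrow> u = v"
| "walk_le V E (Suc d) u v \<longleftrightarrow> u = v \<or> (\<exists>w\<in>V. E u w \<and> walk_le V E d w v)"

definition gdist :: "'a set \<Rightarrow> ('a \<Rightarrow> 'a \<Rightarrow> bool) \<Rightarrow> 'a \<Rightarrow> 'a \<Rightarrow> nat" where
  "gdist V E u v = (LEAST d. walk_le V E d u v)"

definition resolving :: "'a set \<Rightarrow> ('a \<Rightarrow> 'a \<Rightarrow> bool) \<Rightarrow> 'a set \<Rightarrow> bool" where
  "resolving V E U \<longleftrightarrow> U \<subseteq> V \<and>
     (\<forall>u\<in>V. \<forall>v\<in>V. u \<noteq> v \<longrightarrow> (\<exists>w\<in>U. gdist V E u w \<noteq> gdist V E v w))"

definition num_resolving :: "'a set \<Rightarrow> ('a \<Rightarrow> 'a \<Rightarrow> bool) \<Rightarrow> nat \<Rightarrow> nat" where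
  "num_resolving V E k = card {U. resolving V E U \<and> card U = k}"

definition metric_dim :: "'a set \<Rightarrow> ('a \<Rightarrow> 'a \<Rightarrow> bool) \<Rightarrow> nat" where
  "metric_dim V E = (LEAST k. \<exists>U. resolving V E U \<and> card U = k)"

definition resolving_poly :: "'a set \<Rightarrow> ('a \<Rightarrow> 'a \<Rightarrow> bool) \<Rightarrow> int poly" where
  "resolving_poly V E =
     (\<Sum>k\<in>{metric_dim V E..card V}. monom (int (num_resolving V E k)) k)"

end

(*
  P(n) is the cyclic group Z/m, m = 2^(n-1), in which a^k = k a; every a in H(n) has
  a^2 = 0 and a^3 = a.  Since m is a power of 2, of two residues one is a multiple of the
  other, so the power graph is the complete graph on P(n) with the elements of H(n) hanging
  off the identity.  All distances are therefore 0, 1 or 2, and the vertices fall into three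
  classes of twins, {0}, P(n) - {0} and H(n), of sizes 1, m - 1 and m.  A set is resolving
  iff its complement meets every twin class at most once, so the complements of the
  resolving sets of size 2m - j are counted by the j-th elementary symmetric function
  of 1, m - 1, m: this gives 1, 2m, m^2 + m - 1 and m^2 - m for j = 0, 1, 2, 3.
*)

theory Submission
  imports Defs "HOL-Computational_Algebra.Primes" "HOL-Library.FuncSet"
begin

lemma gm_pos: "0 < gm n"
  by (simp add: gm_def)

lemma gm_ge_4: "3 \<le> n \<Longrightarrow> 4 \<le> gm n"
  using power_increasing[of 2 "n - 1" "2::nat"] by (simp add: gm_def)

lemma gcarrier_eq: "1 \<le> n \<Longrightarrow> gcarrier n = {0..<2 * gm n}"
  by (cases n) (simp_all add: gcarrier_def gm_def)

lemma gpow_P: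
  assumes "a < gm n"
  shows "gpow n a (Suc k) = (Suc k * a) mod gm n"
proof (induction k)
  case 0
  show ?case using assms by simp
next
  case (Suc k)
  have "gpow n a (Suc (Suc k)) = ((Suc k * a) mod gm n + a) mod gm n"
    using Suc assms gm_pos[of n] by (simp add: gop_def Let_def)
  also have "\<dots> = (Suc (Suc k) * a) mod gm n"
    by (simp add: mod_add_right_eq algebra_simps)
  finally show ?case .
qed

lemma gpow_H:
  assumes "2 \<le> n" "gm n \<le> a" "a < 2 * gm n"
  shows "gpow n a (Suc k) = (if even k then a else 0)"
proof -
  define h where "h = 2 ^ (n - 2) - (1::nat)"
  have h: "gm n = 2 * Suc h"
    using assms(1) unfolding h_def by (cases n; cases "n - 1") (auto simp: gm_def)
  show ?thesis
  proof (induction k)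
    case 0
    show ?case by simp
  next
    case (Suc k)
    show ?case
    proof (cases "even k")
      case True
      have "(gm n div 2 + 1) * a + (gm n div 2 - 1) * a = gm n * a"
        by (simp add: h algebra_simps)
      then show ?thesis
        using True Suc assms by (simp add: gop_def Let_def)
    next
      case False
      have "a mod gm n = a - gm n"
        using assms by (simp add: le_mod_geq)
      then show ?thesis
        using False Suc assms by (simp add: gop_def Let_def)
    qed
  qed
qed

text \<open>Bezout gives \<open>u x \<equiv> gcd u m (mod m)\<close>; adding \<open>m\<close> to the multiplier \<open>x c\<close>
  makes it positive.\<close>
lemma exists_Suc_mult_mod_eq:
  fixes u v m :: nat
  assumes "u \<noteq> 0" "gcd u m dvd v" "v < m"
  shows "\<exists>k. (Suc k * u) mod m = v"
proof -
  obtain x y where xy: "u * x = m * y + gcd u m"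
    using bezout_nat[OF assms(1)] by blast
  obtain c where c: "v = gcd u m * c"
    using assms(2) by blast
  have "((x * c + m) * u) mod m = ((m * y + gcd u m) * c + m * u) mod m"
    by (metis xy add_mult_distrib mult.commute mult.assoc)
  also have "\<dots> = (gcd u m * c + m * (y * c + u)) mod m"
    by (simp add: algebra_simps)
  also have "\<dots> = v"
    using c assms(3) by simp
  finally have "((x * c + m) * u) mod m = v" .
  moreover have "0 < x * c + m"
    using assms(3) by simp
  ultimately show ?thesis
    by (metis gr0_conv_Suc)
qed

text \<open>The divisors of a prime power are totally ordered by divisibility.\<close>
lemma prime_power_mod_multiple:
  fixes p e u v :: nat
  assumes "prime p" "u < p ^ e" "v < p ^ e" "u \<noteq> v"
  shows "\<exists>k. (Suc k * u) mod p ^ e = v \<or> (Suc k * v) mod p ^ e = u"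
proof -
  have directed: "\<exists>k. (Suc k * x) mod p ^ e = y"
    if "y < p ^ e" "x \<noteq> y" "gcd x (p ^ e) dvd gcd y (p ^ e)" for x y
  proof -
    have dvd_y: "gcd x (p ^ e) dvd y"
      using that(3) by (rule dvd_trans) simp
    moreover have "x \<noteq> 0"
    proof
      assume "x = 0"
      then have "p ^ e dvd y" using dvd_y by simp
      then have "y = 0" using that(1) by (metis dvd_imp_le not_gr0 not_le)
      with \<open>x = 0\<close> that(2) show False by simp
    qed
    ultimately show ?thesis using exists_Suc_mult_mod_eq that(1) by blast
  qed
  obtain i j where "gcd u (p ^ e) = p ^ i" "gcd v (p ^ e) = p ^ j"
    using divides_primepow_nat[OF assms(1)] by (meson gcd_dvd2)
  then have "gcd u (p ^ e) dvd gcd v (p ^ e) \<or> gcd v (p ^ e) dvd gcd u (p ^ e)"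
    by (metis le_imp_power_dvd nat_le_linear)
  then show ?thesis
    using directed assms by metis
qed

lemma power_adj_iff:
  assumes "2 \<le> n" "u \<in> gcarrier n" "v \<in> gcarrier n"
  shows "power_adj n u v \<longleftrightarrow> u \<noteq> v \<and> (u = 0 \<or> v = 0 \<or> u < gm n \<and> v < gm n)"
proof -
  have u: "u < 2 * gm n" and v: "v < 2 * gm n"
    using assms gcarrier_eq[of n] by auto
  have powers: "(a < gm n \<and> gpow n a (Suc k) < gm n) \<or> (gm n \<le> a \<and> gpow n a (Suc k) \<in> {a, 0})"
    if "a < 2 * gm n" for a k
  proof (cases "a < gm n")
    case True
    then show ?thesis using gpow_P[of a n k] gm_pos[of n] by simp
  next
    case False
    then show ?thesis using gpow_H[OF assms(1) _ that, of k] by simp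
  qed
  show ?thesis
  proof
    assume "power_adj n u v"
    then obtain k where "u \<noteq> v" "gpow n u (Suc k) = v \<or> gpow n v (Suc k) = u"
      unfolding power_adj_def by (metis Suc_pred' less_eq_Suc_le One_nat_def)
    then show "u \<noteq> v \<and> (u = 0 \<or> v = 0 \<or> u < gm n \<and> v < gm n)"
      using powers[OF u, of k] powers[OF v, of k] by auto
  next
    assume adj: "u \<noteq> v \<and> (u = 0 \<or> v = 0 \<or> u < gm n \<and> v < gm n)"
    have "\<exists>k. gpow n u (Suc k) = v \<or> gpow n v (Suc k) = u"
    proof (cases "u < gm n \<and> v < gm n")
      case True
      then show ?thesis
        using prime_power_mod_multiple[of 2 u "n - 1" v] adj gpow_P
        by (auto simp: gm_def)
    next
      case False
      then have "u = 0 \<and> gm n \<le> v \<or> v = 0 \<and> gm n \<le> u"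
        using adj gm_pos[of n] by auto
      then show ?thesis
        using gpow_H[OF assms(1) _ u, of 1] gpow_H[OF assms(1) _ v, of 1]
        by (auto simp del: gpow.simps)
    qed
    then show "power_adj n u v"
      using adj assms unfolding power_adj_def by (metis le_add1 plus_1_eq_Suc)
  qed
qed

lemma gdist_self: "gdist V E u u = 0"
  unfolding gdist_def by (rule Least_equality) auto

lemma gdist_universal_vertex:
  assumes "z \<in> V" "\<forall>v\<in>V. v \<noteq> z \<longrightarrow> E z v \<and> E v z"
    and "x \<in> V" "y \<in> V" "x \<noteq> y"
  shows "gdist V E x y = (if E x y then 1 else 2)"
proof -
  have walk0: "\<not> walk_le V E 0 x y"
    using assms(5) by simp
  have walk1: "walk_le V E 1 x y \<longleftrightarrow> E x y"
    using assms(4,5) by auto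
  show ?thesis
  proof (cases "E x y")
    case True
    have "gdist V E x y = 1"
      unfolding gdist_def
    proof (rule Least_equality)
      show "walk_le V E 1 x y" using True walk1 by simp
    next
      fix d assume "walk_le V E d x y"
      with walk0 show "1 \<le> d" by (cases d) auto
    qed
    then show ?thesis using True by simp
  next
    case False
    have "E x z \<and> E z y"
      using assms False by (metis (full_types))
    then have walk2: "walk_le V E 2 x y"
      using assms(1,4) by (auto simp: numeral_2_eq_2)
    have "gdist V E x y = 2"
      unfolding gdist_def
    proof (rule Least_equality)
      show "walk_le V E 2 x y" by (fact walk2)
    next
      fix d assume "walk_le V E d x y"
      with walk0 walk1 False show "2 \<le> d"
        by (metis One_nat_def less_2_cases not_le)
    qed
    then show ?thesis using False by simp
  qed
qed

lemma gdist_power_graph: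
  assumes "2 \<le> n" "x \<in> gcarrier n" "y \<in> gcarrier n" "x \<noteq> y"
  shows "gdist (gcarrier n) (power_adj n) x y =
    (if x = 0 \<or> y = 0 \<or> x < gm n \<and> y < gm n then 1 else 2)"
proof -
  have zero: "0 \<in> gcarrier n"
    by (simp add: gcarrier_def)
  have "\<forall>v\<in>gcarrier n. v \<noteq> 0 \<longrightarrow> power_adj n 0 v \<and> power_adj n v 0"
    using power_adj_iff[OF assms(1) zero] power_adj_iff[OF assms(1) _ zero] by auto
  then show ?thesis
    using gdist_universal_vertex[OF zero _ assms(2-4)] power_adj_iff[OF assms(1-3)] assms(4) by simp
qed

definition twin_class :: "nat \<Rightarrow> nat \<Rightarrow> nat" where
  "twin_class n x = (if x = 0 then 0 else if x < gm n then 1 else 2)"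

lemma resolving_twins_eq:
  assumes "resolving V E U" "u \<in> V - U" "v \<in> V - U"
    and "\<forall>w\<in>V - {u, v}. gdist V E u w = gdist V E v w"
  shows "u = v"
  using assms unfolding resolving_def by blast

lemma twin_class_eq_iff:
  "twin_class n x = twin_class n y \<longleftrightarrow> (x = 0 \<longleftrightarrow> y = 0) \<and> (x < gm n \<longleftrightarrow> y < gm n)"
  using gm_pos[of n] by (auto simp: twin_class_def)

lemma gdist_power_graph_twins:
  assumes "2 \<le> n" "twin_class n u = twin_class n v"
    and "u \<in> gcarrier n" "v \<in> gcarrier n" "w \<in> gcarrier n - {u, v}"
  shows "gdist (gcarrier n) (power_adj n) u w = gdist (gcarrier n) (power_adj n) v w"
proof -
  have "(u = 0 \<longleftrightarrow> v = 0) \<and> (u < gm n \<longleftrightarrow> v < gm n)"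
    using assms(2) twin_class_eq_iff by blast
  moreover have "gdist (gcarrier n) (power_adj n) u w =
      (if u = 0 \<or> w = 0 \<or> u < gm n \<and> w < gm n then 1 else 2)"
    by (rule gdist_power_graph) (use assms in auto)
  moreover have "gdist (gcarrier n) (power_adj n) v w =
      (if v = 0 \<or> w = 0 \<or> v < gm n \<and> w < gm n then 1 else 2)"
    by (rule gdist_power_graph) (use assms in auto)
  ultimately show ?thesis
    by simp
qed

lemma inj_on_twin_class_if_resolving:
  assumes "2 \<le> n" "resolving (gcarrier n) (power_adj n) U"
  shows "inj_on (twin_class n) (gcarrier n - U)"
proof (rule inj_onI)
  fix u v assume uv: "u \<in> gcarrier n - U" "v \<in> gcarrier n - U" "twin_class n u = twin_class n v"
  show "u = v"
    by (rule resolving_twins_eq[OF assms(2) uv(1,2)])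
      (use gdist_power_graph_twins[OF assms(1) uv(3)] uv in auto)
qed

lemma meets_P_and_H_if_inj_on_complement:
  assumes "3 \<le> n" "inj_on (twin_class n) (gcarrier n - U)"
  shows "\<exists>q\<in>U. 0 < q \<and> q < gm n" and "\<exists>h\<in>U. gm n \<le> h"
proof -
  have m: "4 \<le> gm n"
    using gm_ge_4[OF assms(1)] .
  have meet: "x \<in> U \<or> y \<in> U"
    if "x < 2 * gm n" "y < 2 * gm n" "x \<noteq> y" "twin_class n x = twin_class n y" for x y
  proof (rule ccontr)
    assume "\<not> (x \<in> U \<or> y \<in> U)"
    then have "x \<in> gcarrier n - U" "y \<in> gcarrier n - U"
      using that(1,2) assms(1) gcarrier_eq[of n] by auto
    then show False
      using inj_onD[OF assms(2) that(4)] that(3) by blast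
  qed
  have "1 \<in> U \<or> 2 \<in> U"
    by (rule meet) (use m in \<open>simp_all add: twin_class_eq_iff\<close>)
  then obtain q where "q \<in> U" "q \<in> {1, 2}"
    by blast
  then show "\<exists>q\<in>U. 0 < q \<and> q < gm n"
    using m by (intro bexI[of _ q]) auto
  have "gm n \<in> U \<or> gm n + 1 \<in> U"
    by (rule meet) (use m in \<open>simp_all add: twin_class_eq_iff\<close>)
  then show "\<exists>h\<in>U. gm n \<le> h"
    by (metis le_add1 order_refl)
qed

text \<open>A pair meeting \<open>H(n)\<close> once is
  separated by an element of \<open>U \<inter> P(n) - {0}\<close>; otherwise one of the two is \<open>0\<close> and an
  element of \<open>U \<inter> H(n)\<close> separates them.\<close>
lemma resolving_if_inj_on_twin_class:
  assumes "3 \<le> n" "U \<subseteq> gcarrier n" "inj_on (twin_class n) (gcarrier n - U)"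
  shows "resolving (gcarrier n) (power_adj n) U"
proof -
  let ?V = "gcarrier n" and ?d = "gdist (gcarrier n) (power_adj n)"
  have d: "?d x y = (if x = 0 \<or> y = 0 \<or> x < gm n \<and> y < gm n then 1 else 2)"
    if "x \<in> ?V" "y \<in> ?V" "x \<noteq> y" for x y
    using gdist_power_graph[of n x y] assms(1) that by simp
  obtain q where q: "q \<in> U" "0 < q" "q < gm n"
    using meets_P_and_H_if_inj_on_complement(1)[OF assms(1,3)] by blast
  obtain h where h: "h \<in> U" "gm n \<le> h"
    using meets_P_and_H_if_inj_on_complement(2)[OF assms(1,3)] by blast
  have "\<exists>w\<in>U. ?d u w \<noteq> ?d v w" if uv: "u \<in> ?V" "v \<in> ?V" "u \<noteq> v" for u v
  proof -
    consider "u \<in> U" | "v \<in> U" | "u \<notin> U" "v \<notin> U" "twin_class n u \<noteq> twin_class n v"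
      using assms(3) uv unfolding inj_on_def by blast
    then show ?thesis
    proof cases
      case 1
      have "?d v u \<noteq> ?d u u"
        using d[of v u] uv by (simp add: gdist_self)
      then show ?thesis using 1 by metis
    next
      case 2
      have "?d u v \<noteq> ?d v v"
        using d[of u v] uv by (simp add: gdist_self)
      then show ?thesis using 2 by metis
    next
      case 3
      then have classes: "\<not> ((u = 0 \<longleftrightarrow> v = 0) \<and> (u < gm n \<longleftrightarrow> v < gm n))"
        by (simp add: twin_class_eq_iff)
      show ?thesis
      proof (cases "gm n \<le> u \<or> gm n \<le> v")
        case True
        have "q \<noteq> u" "q \<noteq> v" "q \<in> ?V"
          using 3 q assms(2) by auto
        then have "?d u q \<noteq> ?d v q"
          using d[of u q] d[of v q] uv True classes q by auto
        then show ?thesis using q by blast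
      next
        case False
        have "h \<noteq> u" "h \<noteq> v" "h \<in> ?V"
          using 3 h assms(2) by auto
        then have "?d u h \<noteq> ?d v h"
          using d[of u h] d[of v h] uv False classes h by auto
        then show ?thesis using h by blast
      qed
    qed
  qed
  then show ?thesis
    unfolding resolving_def using assms(2) by blast
qed

lemma resolving_power_graph_iff:
  assumes "3 \<le> n"
  shows "resolving (gcarrier n) (power_adj n) U \<longleftrightarrow>
    U \<subseteq> gcarrier n \<and> inj_on (twin_class n) (gcarrier n - U)"
proof
  assume res: "resolving (gcarrier n) (power_adj n) U"
  then have "U \<subseteq> gcarrier n"
    by (simp add: resolving_def)
  with res show "U \<subseteq> gcarrier n \<and> inj_on (twin_class n) (gcarrier n - U)"
    using assms inj_on_twin_class_if_resolving by simp
next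
  assume "U \<subseteq> gcarrier n \<and> inj_on (twin_class n) (gcarrier n - U)"
  then show "resolving (gcarrier n) (power_adj n) U"
    using assms resolving_if_inj_on_twin_class by blast
qed

lemma card_subsets_by_complement:
  assumes "finite V" "k \<le> card V"
  shows "card {U. U \<subseteq> V \<and> P (V - U) \<and> card U = k} =
    card {C. C \<subseteq> V \<and> P C \<and> card C = card V - k}"
proof -
  let ?A = "{U. U \<subseteq> V \<and> P (V - U) \<and> card U = k}"
    and ?B = "{C. C \<subseteq> V \<and> P C \<and> card C = card V - k}"
  have card_diff: "card (V - A) = card V - card A" if "A \<subseteq> V" for A
    using that assms(1) by (simp add: card_Diff_subset finite_subset)
  have "bij_betw (\<lambda>U. V - U) ?A ?B"
  proof (rule bij_betw_byWitness[where f' = "\<lambda>C. V - C"])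
    show "\<forall>U\<in>?A. V - (V - U) = U" "\<forall>C\<in>?B. V - (V - C) = C"
      by auto
    show "(\<lambda>U. V - U) ` ?A \<subseteq> ?B"
      using card_diff by auto
    show "(\<lambda>C. V - C) ` ?B \<subseteq> ?A"
      using card_diff assms(2) by (auto simp: double_diff)
  qed
  then show ?thesis
    by (rule bij_betw_same_card)
qed

text \<open>A partial transversal with image \<open>S\<close> is the image of a choice function picking one
  element from the fibre over each \<open>i \<in> S\<close>.\<close>
lemma card_partial_transversals_with_image:
  assumes "finite V" "S \<subseteq> f ` V"
  shows "card {C. C \<subseteq> V \<and> inj_on f C \<and> f ` C = S} = (\<Prod>i\<in>S. card {x\<in>V. f x = i})"
proof -
  let ?F = "\<lambda>i. {x\<in>V. f x = i}"
  have fibre: "g i \<in> V" "f (g i) = i" if "g \<in> (\<Pi>\<^sub>E i\<in>S. ?F i)" "i \<in> S" for g i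
    using PiE_mem[OF that] by auto
  have inj: "inj_on (\<lambda>g. g ` S) (\<Pi>\<^sub>E i\<in>S. ?F i)"
  proof (rule inj_onI)
    fix g g' assume g: "g \<in> (\<Pi>\<^sub>E i\<in>S. ?F i)" and g': "g' \<in> (\<Pi>\<^sub>E i\<in>S. ?F i)"
      and eq: "g ` S = g' ` S"
    show "g = g'"
    proof (rule PiE_ext[OF g g'])
      fix i assume i: "i \<in> S"
      then have "g i \<in> g' ` S"
        using eq by blast
      then obtain j where j: "j \<in> S" "g i = g' j"
        by blast
      then have "i = j"
        using fibre[OF g i] fibre[OF g' j(1)] by simp
      then show "g i = g' i"
        using j by simp
    qed
  qed
  have image: "(\<lambda>g. g ` S) ` (\<Pi>\<^sub>E i\<in>S. ?F i) = {C. C \<subseteq> V \<and> inj_on f C \<and> f ` C = S}"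
  proof (intro equalityI subsetI)
    fix C assume "C \<in> (\<lambda>g. g ` S) ` (\<Pi>\<^sub>E i\<in>S. ?F i)"
    then obtain g where g: "g \<in> (\<Pi>\<^sub>E i\<in>S. ?F i)" and C: "C = g ` S"
      by blast
    have "C \<subseteq> V"
      using fibre[OF g] C by blast
    moreover have "inj_on f C"
      unfolding C by (rule inj_onI) (auto simp: fibre[OF g])
    moreover have "f ` C = S"
      unfolding C image_image by (simp add: fibre[OF g] cong: image_cong)
    ultimately show "C \<in> {C. C \<subseteq> V \<and> inj_on f C \<and> f ` C = S}"
      by blast
  next
    fix C assume "C \<in> {C. C \<subseteq> V \<and> inj_on f C \<and> f ` C = S}"
    then have C: "C \<subseteq> V" "inj_on f C" "f ` C = S"
      by auto
    let ?g = "restrict (inv_into C f) S"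
    have "?g \<in> (\<Pi>\<^sub>E i\<in>S. ?F i)"
      using C by (auto intro: inv_into_into f_inv_into_f)
    moreover have "?g ` S = C"
      using C inv_into_image_cancel[of f C C] by simp
    ultimately show "C \<in> (\<lambda>g. g ` S) ` (\<Pi>\<^sub>E i\<in>S. ?F i)"
      by blast
  qed
  have "finite S"
    using assms finite_surj by blast
  then show ?thesis
    using card_image[OF inj] card_PiE[of S ?F] image by simp
qed

lemma card_partial_transversals:
  assumes "finite V"
  shows "card {C. C \<subseteq> V \<and> inj_on f C \<and> card C = j} =
    (\<Sum>S | S \<subseteq> f ` V \<and> card S = j. \<Prod>i\<in>S. card {x\<in>V. f x = i})"
proof -
  let ?T = "\<lambda>S. {C. C \<subseteq> V \<and> inj_on f C \<and> f ` C = S}"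
  have "{C. C \<subseteq> V \<and> inj_on f C \<and> card C = j} = (\<Union>S\<in>{S. S \<subseteq> f ` V \<and> card S = j}. ?T S)"
    by (auto simp: card_image image_mono)
  moreover have "card (\<Union>S\<in>{S. S \<subseteq> f ` V \<and> card S = j}. ?T S) =
      (\<Sum>S | S \<subseteq> f ` V \<and> card S = j. card (?T S))"
  proof (rule card_UN_disjoint)
    show "finite {S. S \<subseteq> f ` V \<and> card S = j}"
      using assms by simp
    show "\<forall>S\<in>{S. S \<subseteq> f ` V \<and> card S = j}. finite (?T S)"
      using assms by (auto intro: finite_subset[of _ "Pow V"])
    show "\<forall>S\<in>{S. S \<subseteq> f ` V \<and> card S = j}. \<forall>S'\<in>{S. S \<subseteq> f ` V \<and> card S = j}.
        S \<noteq> S' \<longrightarrow> ?T S \<inter> ?T S' = {}"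
      by blast
  qed
  ultimately show ?thesis
    using assms by (simp add: card_partial_transversals_with_image)
qed
lemma sum_prod_subsets_of_three:
  fixes a :: "nat \<Rightarrow> 'a::comm_semiring_1"
  shows "(\<Sum>S | S \<subseteq> {0, 1, 2} \<and> card S = 0. \<Prod>i\<in>S. a i) = 1"
    and "(\<Sum>S | S \<subseteq> {0, 1, 2} \<and> card S = 1. \<Prod>i\<in>S. a i) = a 0 + a 1 + a 2"
    and "(\<Sum>S | S \<subseteq> {0, 1, 2} \<and> card S = 2. \<Prod>i\<in>S. a i) = a 0 * a 1 + a 0 * a 2 + a 1 * a 2"
    and "(\<Sum>S | S \<subseteq> {0, 1, 2} \<and> card S = 3. \<Prod>i\<in>S. a i) = a 0 * a 1 * a 2"
proof -
  have fin: "finite S" if "S \<subseteq> {0, 1, 2::nat}" for S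
    using that by (rule finite_subset) simp
  have "{S. S \<subseteq> {0, 1, 2::nat} \<and> card S = 0} = {{}}"
    using fin by auto
  then show "(\<Sum>S | S \<subseteq> {0, 1, 2} \<and> card S = 0. \<Prod>i\<in>S. a i) = 1"
    by simp
  have "{S. S \<subseteq> {0, 1, 2::nat} \<and> card S = 1} = {{0}, {1}, {2}}"
    by (auto simp: card_1_singleton_iff)
  then show "(\<Sum>S | S \<subseteq> {0, 1, 2} \<and> card S = 1. \<Prod>i\<in>S. a i) = a 0 + a 1 + a 2"
    by (simp add: add.assoc)
  have "{S. S \<subseteq> {0, 1, 2::nat} \<and> card S = 2} = {{0, 1}, {0, 2}, {1, 2}}"
    by (auto simp: card_2_iff doubleton_eq_iff; presburger)
  then show "(\<Sum>S | S \<subseteq> {0, 1, 2} \<and> card S = 2. \<Prod>i\<in>S. a i) = a 0 * a 1 + a 0 * a 2 + a 1 * a 2"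
    by (simp add: doubleton_eq_iff add.assoc)
  have "S = {0, 1, 2}" if "S \<subseteq> {0, 1, 2::nat}" "card S = 3" for S
    using card_subset_eq[OF _ that(1)] that(2) by simp
  then have "{S. S \<subseteq> {0, 1, 2::nat} \<and> card S = 3} = {{0, 1, 2}}"
    by auto
  then show "(\<Sum>S | S \<subseteq> {0, 1, 2} \<and> card S = 3. \<Prod>i\<in>S. a i) = a 0 * a 1 * a 2"
    by (simp add: mult.assoc)
qed

lemma twin_class_image:
  assumes "3 \<le> n"
  shows "twin_class n ` gcarrier n = {0, 1, 2}"
proof
  show "twin_class n ` gcarrier n \<subseteq> {0, 1, 2}"
    by (auto simp: twin_class_def)
  have "twin_class n 0 = 0" "twin_class n 1 = 1" "twin_class n (gm n) = 2"
    using gm_ge_4[OF assms] by (simp_all add: twin_class_def)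
  moreover have "0 \<in> gcarrier n" "1 \<in> gcarrier n" "gm n \<in> gcarrier n"
    using assms gm_ge_4[OF assms] gcarrier_eq[of n] by auto
  ultimately show "{0, 1, 2} \<subseteq> twin_class n ` gcarrier n"
    by (metis empty_subsetI image_eqI insert_subset)
qed

lemma twin_class_sizes:
  assumes "3 \<le> n"
  shows "card {x \<in> gcarrier n. twin_class n x = 0} = 1"
    and "card {x \<in> gcarrier n. twin_class n x = 1} = gm n - 1"
    and "card {x \<in> gcarrier n. twin_class n x = 2} = gm n"
proof -
  have V: "gcarrier n = {0..<2 * gm n}"
    using assms gcarrier_eq by simp
  have "{x \<in> gcarrier n. twin_class n x = 0} = {0}"
    "{x \<in> gcarrier n. twin_class n x = 1} = {1..<gm n}"
    "{x \<in> gcarrier n. twin_class n x = 2} = {gm n..<2 * gm n}"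
    using gm_pos[of n] by (auto simp: V twin_class_def)
  then show "card {x \<in> gcarrier n. twin_class n x = 0} = 1"
    "card {x \<in> gcarrier n. twin_class n x = 1} = gm n - 1"
    "card {x \<in> gcarrier n. twin_class n x = 2} = gm n"
    by simp_all
qed

lemma card_twin_transversals:
  assumes "3 \<le> n"
  shows "card {C. C \<subseteq> gcarrier n \<and> inj_on (twin_class n) C \<and> card C = 0} = 1"
    and "card {C. C \<subseteq> gcarrier n \<and> inj_on (twin_class n) C \<and> card C = 1} = 2 * gm n"
    and "card {C. C \<subseteq> gcarrier n \<and> inj_on (twin_class n) C \<and> card C = 2} = gm n * gm n + gm n - 1"
    and "card {C. C \<subseteq> gcarrier n \<and> inj_on (twin_class n) C \<and> card C = 3} = gm n * gm n - gm n"
proof -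
  let ?c = "\<lambda>i. card {x \<in> gcarrier n. twin_class n x = i}"
  have count: "card {C. C \<subseteq> gcarrier n \<and> inj_on (twin_class n) C \<and> card C = j} =
      (\<Sum>S | S \<subseteq> {0, 1, 2} \<and> card S = j. \<Prod>i\<in>S. ?c i)" for j
    using card_partial_transversals[of "gcarrier n" "twin_class n" j] twin_class_image[OF assms]
    by (simp add: gcarrier_def)
  obtain k where k: "gm n = Suc k"
    using gm_pos[of n] gr0_conv_Suc by blast
  show "card {C. C \<subseteq> gcarrier n \<and> inj_on (twin_class n) C \<and> card C = 0} = 1"
    "card {C. C \<subseteq> gcarrier n \<and> inj_on (twin_class n) C \<and> card C = 1} = 2 * gm n"
    "card {C. C \<subseteq> gcarrier n \<and> inj_on (twin_class n) C \<and> card C = 2} = gm n * gm n + gm n - 1"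
    "card {C. C \<subseteq> gcarrier n \<and> inj_on (twin_class n) C \<and> card C = 3} = gm n * gm n - gm n"
    unfolding count sum_prod_subsets_of_three twin_class_sizes[OF assms] k by simp_all
qed

lemma card_twin_transversal_le_3:
  assumes "inj_on (twin_class n) C"
  shows "card C \<le> 3"
proof -
  have "twin_class n ` C \<subseteq> {0, 1, 2}"
    by (auto simp: twin_class_def)
  then have "card C \<le> card {0, 1, 2::nat}"
    by (rule card_inj_on_le[OF assms]) simp
  then show ?thesis
    by simp
qed

lemma num_resolving_power_graph:
  assumes "3 \<le> n" "j \<le> 2 * gm n"
  shows "num_resolving (gcarrier n) (power_adj n) (2 * gm n - j) =
    card {C. C \<subseteq> gcarrier n \<and> inj_on (twin_class n) C \<and> card C = j}"
proof -
  have V: "finite (gcarrier n)" "card (gcarrier n) = 2 * gm n"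
    using assms gcarrier_eq[of n] by auto
  have "{U. resolving (gcarrier n) (power_adj n) U \<and> card U = 2 * gm n - j} =
      {U. U \<subseteq> gcarrier n \<and> inj_on (twin_class n) (gcarrier n - U) \<and> card U = 2 * gm n - j}"
    using resolving_power_graph_iff[OF assms(1)] by auto
  then show ?thesis
    using card_subsets_by_complement[of "gcarrier n" "2 * gm n - j" "inj_on (twin_class n)"] V assms(2)
    by (simp add: num_resolving_def)
qed

lemma metric_dim_power_graph:
  assumes "3 \<le> n"
  shows "metric_dim (gcarrier n) (power_adj n) = 2 * gm n - 3"
  unfolding metric_dim_def
proof (rule Least_equality)
  have "num_resolving (gcarrier n) (power_adj n) (2 * gm n - 3) = gm n * gm n - gm n"
    using num_resolving_power_graph[OF assms, of 3] card_twin_transversals(4)[OF assms]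
      gm_ge_4[OF assms] by simp
  moreover have "gm n < gm n * gm n"
    using gm_ge_4[OF assms] by simp
  ultimately have "{U. resolving (gcarrier n) (power_adj n) U \<and> card U = 2 * gm n - 3} \<noteq> {}"
    unfolding num_resolving_def by (metis card.empty zero_less_diff less_irrefl)
  then show "\<exists>U. resolving (gcarrier n) (power_adj n) U \<and> card U = 2 * gm n - 3"
    by blast
next
  fix k assume "\<exists>U. resolving (gcarrier n) (power_adj n) U \<and> card U = k"
  then obtain U where U: "resolving (gcarrier n) (power_adj n) U" "card U = k"
    by blast
  then have sub: "U \<subseteq> gcarrier n" and inj: "inj_on (twin_class n) (gcarrier n - U)"
    using resolving_power_graph_iff[OF assms] by auto
  have "card (gcarrier n - U) = 2 * gm n - k"
    using sub U(2) assms gcarrier_eq[of n] by (simp add: card_Diff_subset finite_subset)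
  then show "2 * gm n - 3 \<le> k"
    using card_twin_transversal_le_3[OF inj] by simp
qed

lemma resolving_poly_power_graph:
  assumes "3 \<le> n"
  shows "resolving_poly (gcarrier n) (power_adj n) =
      monom 1 (2 * gm n)
    + monom (2 * int (gm n)) (2 * gm n - 1)
    + monom (int (gm n) ^ 2 + int (gm n) - 1) (2 * gm n - 2)
    + monom (int (gm n) ^ 2 - int (gm n)) (2 * gm n - 3)"
proof -
  define m where "m = gm n"
  let ?r = "num_resolving (gcarrier n) (power_adj n)"
  have m: "4 \<le> m"
    using gm_ge_4[OF assms] by (simp add: m_def)
  have card_V: "card (gcarrier n) = 2 * m"
    using assms gcarrier_eq[of n] by (simp add: m_def)
  have r: "?r (2 * m) = 1" "?r (2 * m - 1) = 2 * m"
    "?r (2 * m - 2) = m * m + m - 1" "?r (2 * m - 3) = m * m - m"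
    using num_resolving_power_graph[OF assms, of 0] num_resolving_power_graph[OF assms, of 1]
      num_resolving_power_graph[OF assms, of 2] num_resolving_power_graph[OF assms, of 3]
      card_twin_transversals[OF assms] m
    by (simp_all add: m_def)
  have int_r: "int (m * m + m - 1) = int m ^ 2 + int m - 1" "int (m * m - m) = int m ^ 2 - int m"
    using m by (simp_all add: of_nat_diff power2_eq_square)
  have degrees: "{2 * m - 3..2 * m} = {2 * m - 3, 2 * m - 2, 2 * m - 1, 2 * m}"
    using m by auto
  have "resolving_poly (gcarrier n) (power_adj n) =
      (\<Sum>k\<in>{2 * m - 3, 2 * m - 2, 2 * m - 1, 2 * m}. monom (int (?r k)) k)"
    unfolding resolving_poly_def metric_dim_power_graph[OF assms, folded m_def] card_V degrees ..
  also have "\<dots> = monom (int (?r (2 * m - 3))) (2 * m - 3) + (monom (int (?r (2 * m - 2))) (2 * m - 2)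
      + (monom (int (?r (2 * m - 1))) (2 * m - 1) + monom (int (?r (2 * m))) (2 * m)))"
    using m by (simp add: sum.insert_if) arith
  finally show ?thesis
    unfolding r int_r by (simp add: m_def algebra_simps)
qed

theorem mainTheorem7:
  fixes n :: nat
  assumes "n \<ge> 3"
  shows "resolving_poly (gcarrier n) (power_adj n) =
      monom 1 (2 ^ n)
    + monom (2 ^ n) (2 ^ n - 1)
    + monom (2 ^ (2 * n - 2) + 2 ^ (n - 1) - 1) (2 ^ n - 2)
    + monom (2 ^ (2 * n - 2) - 2 ^ (n - 1)) (2 ^ n - 3)"
proof -
  obtain k where n: "n = Suc k"
    using assms by (cases n) auto
  have pow: "(2::nat) ^ n = 2 * gm n" "(2::int) ^ n = 2 * int (gm n)"
    "(2::int) ^ (n - 1) = int (gm n)" "(2::int) ^ (2 * n - 2) = int (gm n) ^ 2"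
    by (simp_all add: n gm_def power_mult[symmetric] mult.commute)
  show ?thesis
    unfolding pow by (fact resolving_poly_power_graph[OF assms])
qed

end
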